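(* Let $\|\cdot\|$ be a norm on $\mathbb{R}^d$, let $\mathbf{X}_1,\dots,\mathbf{X}_n$ be i.i.d. random vectors in $\mathbb{R}^d$ with parent vector $\mathbf{X}$ such that the cdf of $\|\mathbf{X}\|$ is absolutely continuous, and let $\mathbf{X}_{(1)},\dots,\mathbf{X}_{(n)}$ be their order statistics with respect to the norm. Then, for $y>0$, the distribution of $(\mathbf{X}_{(1)},\dots,\mathbf{X}_{(n-1)})$ conditionally on the event $\{\|\mathbf{X}_{(n)}\|=y\}$ is the distribution of the norm-ordered statistics $(\mathbf{Y}_{(1)},\dots,\mathbf{Y}_{(n-1)})$ of $n-1$ i.i.d. random vectors $\mathbf{Y}_1,\dots,\mathbf{Y}_{n-1}$ with distribution $F_{\mathbf{X}|\|\mathbf{X}\|}(\cdot\,|\,y)$: $$\mathcal{L}\big(\mathbf{X}_{(1)},\dots,\mathbf{X}_{(n-1)}\mid\|\mathbf{X}_{(n)}\|=y\big)=\mathcal{L}\big(\mathbf{Y}_{(1)},\dots,\mathbf{Y}_{(n-1)}\big).$$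
   Context: The norm-ordered statistics are the reordering of $\mathbf{X}_1,\dots,\mathbf{X}_n$ satisfying $\|\mathbf{X}_{(1)}\|\le\dots\le\|\mathbf{X}_{(n)}\|$. The truncated distribution is $F_{\mathbf{X}|\|\mathbf{X}\|}(\mathbf{B}\,|\,y)=\mathbb{P}(\mathbf{X}\in\mathbf{B}\mid\|\mathbf{X}\|\le y)$ for Borel $\mathbf{B}\subset\mathbb{R}^d$. $\mathcal{L}(\cdot)$ denotes the law; conditioning on the null event $\{\|\mathbf{X}_{(n)}\|=y\}$ is understood in the sense of regular conditional distributions. *)

theory Defs
  imports "HOL-Probability.Probability"
begin

definition is_norm :: "('a::real_vector \<Rightarrow> real) \<Rightarrow> bool" where
  "is_norm N \<longleftrightarrow> (\<forall>x. 0 \<le> N x) \<and> (\<forall>x. N x = 0 \<longleftrightarrow> x = 0)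
     \<and> (\<forall>c x. N (c *\<^sub>R x) = \<bar>c\<bar> * N x) \<and> (\<forall>x y. N (x + y) \<le> N x + N y)"

definition abs_continuous_fun :: "(real \<Rightarrow> real) \<Rightarrow> bool" where
  "abs_continuous_fun F \<longleftrightarrow>
     (\<forall>e>0. \<exists>d>0. \<forall>(m::nat) (a::nat \<Rightarrow> real) b.
        (\<forall>k<m. a k \<le> b k) \<and> (\<forall>k<m. \<forall>l<m. k \<noteq> l \<longrightarrow> b k \<le> a l \<or> b l \<le> a k)
        \<and> (\<Sum>k<m. b k - a k) < d \<longrightarrow> (\<Sum>k<m. \<bar>F (b k) - F (a k)\<bar>) < e)"

text \<open>Norm-ordered statistics of x 0, ..., x (n-1): stable sort by the norm N
  (ties, a null event here, broken by index). Result is extensional on {..<n}.\<close>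
definition norm_order :: "('a \<Rightarrow> real) \<Rightarrow> nat \<Rightarrow> (nat \<Rightarrow> 'a) \<Rightarrow> (nat \<Rightarrow> 'a)" where
  "norm_order N n x = (let xs = sort_key N (map x [0..<n]) in
      (\<lambda>i. if i < n then xs ! i else undefined))"

definition trunc_law :: "'w measure \<Rightarrow> ('w \<Rightarrow> 'a::topological_space) \<Rightarrow> ('a \<Rightarrow> real) \<Rightarrow> real \<Rightarrow> 'a measure" where
  "trunc_law M X N y = measure_of UNIV (sets borel)
     (\<lambda>B. ennreal (measure M {w \<in> space M. X w \<in> B \<and> N (X w) \<le> y}
                   / measure M {w \<in> space M. N (X w) \<le> y}))"

end

theory Submission
  imports Defs "HOL-Combinatorics.Transposition"
begin

text \<open>Let \<open>\<mu>\<close> be the law of \<open>X\<close> and \<open>F y = \<mu>{z. N z \<le> y}\<close>. Ties between norms are null events,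
  and the sample is exchangeable, so each of the \<open>n = m + 1\<close> points is equally likely to be the one of
  largest norm: the probability that the first \<open>m\<close> norm-ordered points lie in \<open>A\<close> and the largest norm
  in \<open>B\<close> is \<open>n\<close> times the same probability on the event that the last point \<open>z\<close> is the largest.
  On that event the norm ordering is that of the first \<open>m\<close> points followed by \<open>z\<close>, so by Fubini the
  probability is \<open>n \<integral>\<^sub>B \<mu>\<^sup>m{x. sorted x \<in> A, all norms \<le> N z} d\<mu>(z)\<close>. With \<open>A\<close> the whole space this
  says that the largest norm has density \<open>n F\<^sup>m\<close> with respect to the law of \<open>N X\<close>, while the \<open>m\<close>-fold
  product of the truncated law gives \<open>A\<close> the mass \<open>F(y)\<^sup>-\<^sup>m \<mu>\<^sup>m{x. sorted x \<in> A, all norms \<le> y}\<close>.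
  Comparing the two expressions yields the disintegration.\<close>

section \<open>Stable sorting by norm\<close>

lemma insort_key_cong:
  "(\<And>b. b \<in> set ys \<Longrightarrow> f a \<le> f b \<longleftrightarrow> g a \<le> g b) \<Longrightarrow> insort_key f a ys = insort_key g a ys"
  by (induction ys) auto

lemma sort_key_cong_order:
  "(\<And>a b. a \<in> set xs \<Longrightarrow> b \<in> set xs \<Longrightarrow> f a \<le> f b \<longleftrightarrow> g a \<le> g b) \<Longrightarrow>
    sort_key f xs = sort_key g xs"
  by (induction xs) (auto intro!: insort_key_cong)

lemma insort_key_map: "insort_key f (g a) (map g ys) = map g (insort_key (\<lambda>a. f (g a)) a ys)"
  by (induction ys) auto

lemma sort_key_map: "sort_key f (map g xs) = map g (sort_key (\<lambda>a. f (g a)) xs)"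
  by (induction xs) (simp_all add: insort_key_map)

lemma insort_key_append_max:
  "f a \<le> f z \<Longrightarrow> insort_key f a (ys @ [z]) = insort_key f a ys @ [z]"
  by (induction ys) auto

lemma sort_key_append_max:
  "(\<And>a. a \<in> set xs \<Longrightarrow> f a \<le> f z) \<Longrightarrow> sort_key f (xs @ [z]) = sort_key f xs @ [z]"
  by (induction xs) (simp_all add: insort_key_append_max)

lemma norm_order_outside: "n \<le> i \<Longrightarrow> norm_order N n x i = undefined"
  by (simp add: norm_order_def)

lemma norm_order_extensional: "norm_order N n x \<in> extensional {..<n}"
  by (simp add: extensional_def norm_order_outside)

lemma norm_order_cong: "(\<And>i. i < n \<Longrightarrow> x i = y i) \<Longrightarrow> norm_order N n x = norm_order N n y"
proof -
  assume "\<And>i. i < n \<Longrightarrow> x i = y i"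
  then have "map x [0..<n] = map y [0..<n]"
    by simp
  then show ?thesis
    by (simp only: norm_order_def)
qed

lemma norm_order_restrict: "norm_order N n (restrict x {..<n}) = norm_order N n x"
  by (rule norm_order_cong) simp

lemma norm_order_eq_reindex:
  "norm_order N n x = (\<lambda>i\<in>{..<n}. x (sort_key (\<lambda>j. N (x j)) [0..<n] ! i))"
  unfolding norm_order_def Let_def by (auto simp: sort_key_map[of N x])

text \<open>Ties with \<open>z\<close> are harmless: \<open>sort_key\<close> is stable and \<open>z\<close> comes last.\<close>

lemma norm_order_fun_upd_last_max:
  assumes "\<And>i. i < m \<Longrightarrow> N (x i) \<le> N z"
  shows "norm_order N (Suc m) (x(m := z)) = (norm_order N m x)(m := z)"
proof -
  have "map (x(m := z)) [0..<Suc m] = map x [0..<m] @ [z]"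
    by simp
  moreover have "sort_key N (map x [0..<m] @ [z]) = sort_key N (map x [0..<m]) @ [z]"
    using assms by (intro sort_key_append_max) auto
  ultimately show ?thesis
    by (auto simp: norm_order_def nth_append not_less_less_Suc_eq simp del: upt_Suc)
qed

lemma norm_order_permute:
  assumes "bij_betw \<sigma> {..<n} {..<n}" and "inj_on (\<lambda>i. N (x i)) {..<n}"
  shows "norm_order N n (x \<circ> \<sigma>) = norm_order N n x"
proof -
  have "mset (map (x \<circ> \<sigma>) [0..<n]) = image_mset x (image_mset \<sigma> (mset_set {..<n}))"
    by (simp add: atLeast0LessThan multiset.map_comp)
  also have "\<dots> = mset (map x [0..<n])"
    using assms(1) by (simp add: image_mset_mset_set bij_betw_def atLeast0LessThan)
  finally have "mset (map (x \<circ> \<sigma>) [0..<n]) = mset (map x [0..<n])" .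
  moreover have "set (map (x \<circ> \<sigma>) [0..<n]) = x ` {..<n}"
    using bij_betw_imp_surj_on[OF assms(1)] by (metis atLeast_upt image_comp set_map)
  moreover have "inj_on N (x ` {..<n})"
    using assms(2) by (intro inj_on_imageI) (simp add: comp_def)
  ultimately have "sort_key N (map (x \<circ> \<sigma>) [0..<n]) = sort_key N (map x [0..<n])"
    by (intro sort_key_eq_sort_key) simp_all
  then show ?thesis
    by (simp only: norm_order_def)
qed

section \<open>Measurability of the norm ordering\<close>

lemma pred_Ball_lessThan_le:
  fixes g :: "nat \<Rightarrow> 'a \<Rightarrow> real"
  assumes "\<And>i. i < n \<Longrightarrow> g i \<in> borel_measurable M" and "h \<in> borel_measurable M"
  shows "Measurable.pred M (\<lambda>x. \<forall>i\<in>{..<n}. g i x \<le> h x)"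
  using assms by (intro pred_intros_finite finite_lessThan) (auto simp: Measurable.pred_def)

lemma borel_measurable_PiM_component:
  "i \<in> I \<Longrightarrow> f \<in> borel_measurable M \<Longrightarrow> (\<lambda>x. f (x i)) \<in> borel_measurable (PiM I (\<lambda>_. M))"
  by (rule measurable_compose[OF measurable_component_singleton])

lemma is_norm_convex: "is_norm N \<Longrightarrow> convex_on UNIV N"
proof (rule convex_onI)
  fix t :: real and x y
  assume N: "is_norm N" and t: "0 < t" "t < 1"
  then have "N ((1 - t) *\<^sub>R x + t *\<^sub>R y) \<le> N ((1 - t) *\<^sub>R x) + N (t *\<^sub>R y)"
    unfolding is_norm_def by blast
  also have "\<dots> = (1 - t) * N x + t * N y"
    using N t by (simp add: is_norm_def)
  finally show "N ((1 - t) *\<^sub>R x + t *\<^sub>R y) \<le> (1 - t) * N x + t * N y" .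
qed simp

lemma is_norm_borel_measurable:
  fixes N :: "'a::euclidean_space \<Rightarrow> real"
  shows "is_norm N \<Longrightarrow> N \<in> borel_measurable borel"
  by (intro borel_measurable_continuous_onI convex_on_continuous is_norm_convex) simp_all

lemma sets_PiM_norm_comparisons:
  fixes N :: "'a \<Rightarrow> real" and n :: nat
  assumes [measurable]: "N \<in> borel_measurable K"
  shows "{x \<in> space (PiM {..<n} (\<lambda>_. K)). \<forall>j\<in>{..<n}. \<forall>k\<in>{..<n}. (j, k) \<in> R \<longleftrightarrow> N (x j) \<le> N (x k)}
    \<in> sets (PiM {..<n} (\<lambda>_. K))"
proof -
  let ?P = "PiM {..<n} (\<lambda>_. K)"
  have comp: "(\<lambda>x. N (x j)) \<in> borel_measurable ?P" if "j \<in> {..<n}" for j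
    using that by measurable
  have "Measurable.pred ?P (\<lambda>x. N (x j) \<le> N (x k))" if "j \<in> {..<n}" "k \<in> {..<n}" for j k
    unfolding Measurable.pred_def using comp[OF that(1)] comp[OF that(2)] by (rule borel_measurable_le)
  then have "Measurable.pred ?P (\<lambda>x. \<forall>j\<in>{..<n}. \<forall>k\<in>{..<n}. (j, k) \<in> R \<longleftrightarrow> N (x j) \<le> N (x k))"
    by (intro pred_intros_finite finite_lessThan pred_intros_logic) simp_all
  then show ?thesis
    by (simp add: Measurable.pred_def)
qed

text \<open>The sorting permutation is determined by the pattern of pairwise comparisons of the norms,
  which takes only finitely many values, each on a measurable set.\<close>

lemma measurable_sort_key_indices:
  fixes N :: "'a \<Rightarrow> real"
  assumes "N \<in> borel_measurable K"
  shows "(\<lambda>x. sort_key (\<lambda>j. N (x j)) [0..<n])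
    \<in> PiM {..<n} (\<lambda>_. K) \<rightarrow>\<^sub>M count_space {ps. set ps \<subseteq> {..<n} \<and> length ps = n}"
proof -
  let ?P = "PiM {..<n} (\<lambda>_. K)"
  define perm where "perm x = sort_key (\<lambda>j. N (x j)) [0..<n]" for x :: "nat \<Rightarrow> 'a"
  define cmp where "cmp x = {(j, k) \<in> {..<n} \<times> {..<n}. N (x j) \<le> N (x k)}" for x :: "nat \<Rightarrow> 'a"
  have perm_cmp: "perm x = perm x'" if "cmp x = cmp x'" for x x'
    unfolding perm_def
  proof (rule sort_key_cong_order)
    fix a b
    assume "a \<in> set [0..<n]" "b \<in> set [0..<n]"
    then have "(a, b) \<in> cmp x \<longleftrightarrow> N (x a) \<le> N (x b)" "(a, b) \<in> cmp x' \<longleftrightarrow> N (x' a) \<le> N (x' b)"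
      by (auto simp: cmp_def)
    then show "N (x a) \<le> N (x b) \<longleftrightarrow> N (x' a) \<le> N (x' b)"
      using that by simp
  qed
  have cmp_sets: "{x \<in> space ?P. cmp x = R} \<in> sets ?P" if "R \<subseteq> {..<n} \<times> {..<n}" for R
  proof -
    have "{x \<in> space ?P. cmp x = R} =
        {x \<in> space ?P. \<forall>j\<in>{..<n}. \<forall>k\<in>{..<n}. (j, k) \<in> R \<longleftrightarrow> N (x j) \<le> N (x k)}"
      using that by (auto simp: cmp_def)
    also have "\<dots> \<in> sets ?P"
      using assms by (rule sets_PiM_norm_comparisons)
    finally show ?thesis .
  qed
  have "perm -` {ps} \<inter> space ?P \<in> sets ?P" for ps
  proof -
    have "perm -` {ps} \<inter> space ?P = (\<Union>R\<in>cmp ` (perm -` {ps}). {x \<in> space ?P. cmp x = R})"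
    proof (intro set_eqI iffI)
      fix x
      assume "x \<in> (\<Union>R\<in>cmp ` (perm -` {ps}). {x \<in> space ?P. cmp x = R})"
      then obtain x' where "perm x' = ps" "cmp x = cmp x'" "x \<in> space ?P"
        by auto
      then show "x \<in> perm -` {ps} \<inter> space ?P"
        using perm_cmp[of x x'] by simp
    qed blast
    also have "\<dots> \<in> sets ?P"
    proof (rule sets.finite_UN)
      show "finite (cmp ` (perm -` {ps}))"
        by (rule finite_subset[of _ "Pow ({..<n} \<times> {..<n})"]) (auto simp: cmp_def)
    next
      fix R
      assume "R \<in> cmp ` (perm -` {ps})"
      then show "{x \<in> space ?P. cmp x = R} \<in> sets ?P"
        by (intro cmp_sets) (auto simp: cmp_def)
    qed
    finally show ?thesis .
  qed
  moreover have "finite {ps. set ps \<subseteq> {..<n} \<and> length ps = n}"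
    by (rule finite_lists_length_eq) simp
  ultimately show ?thesis
    unfolding perm_def[symmetric] by (subst measurable_count_space_eq2) (auto simp: perm_def)
qed

lemma norm_order_measurable:
  fixes N :: "'a \<Rightarrow> real"
  assumes "N \<in> borel_measurable K"
  shows "norm_order N n \<in> PiM {..<n} (\<lambda>_. K) \<rightarrow>\<^sub>M PiM {..<n} (\<lambda>_. K)"
proof -
  let ?P = "PiM {..<n} (\<lambda>_. K)" and ?L = "{ps. set ps \<subseteq> {..<n} \<and> length ps = n}"
  have "(\<lambda>x. x (sort_key (\<lambda>j. N (x j)) [0..<n] ! i)) \<in> ?P \<rightarrow>\<^sub>M K" if "i < n" for i
  proof (rule measurable_compose_countable'[where f="\<lambda>ps x. x (ps ! i)" and I="?L"])
    fix ps
    assume "ps \<in> ?L"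
    with that show "(\<lambda>x. x (ps ! i)) \<in> ?P \<rightarrow>\<^sub>M K"
      by (intro measurable_component_singleton) (auto dest!: nth_mem)
  next
    show "countable ?L"
      by (intro countable_finite finite_lists_length_eq) simp
  qed (rule measurable_sort_key_indices[OF assms])
  then show ?thesis
    unfolding norm_order_eq_reindex by (intro measurable_restrict) simp
qed

lemma measurable_norm_order_init:
  fixes N :: "'a \<Rightarrow> real"
  assumes "N \<in> borel_measurable K"
  shows "(\<lambda>x. restrict (norm_order N (Suc m) x) {..<m}) \<in> PiM {..<Suc m} (\<lambda>_. K) \<rightarrow>\<^sub>M PiM {..<m} (\<lambda>_. K)"
  by (rule measurable_compose[OF norm_order_measurable[OF assms] measurable_restrict_subset]) auto

lemma measurable_norm_order_last:
  fixes N :: "'a \<Rightarrow> real"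
  assumes "N \<in> borel_measurable K"
  shows "(\<lambda>x. N (norm_order N (Suc m) x m)) \<in> borel_measurable (PiM {..<Suc m} (\<lambda>_. K))"
  by (rule measurable_compose[OF norm_order_measurable[OF assms] borel_measurable_PiM_component[OF _ assms]])
    simp

lemma sets_norm_order_preimage:
  assumes "N \<in> borel_measurable K" and "C \<in> sets (PiM {..<n} (\<lambda>_. K))"
  shows "{x \<in> space (PiM {..<n} (\<lambda>_. K)). norm_order N n x \<in> C} \<in> sets (PiM {..<n} (\<lambda>_. K))"
  using measurable_sets[OF norm_order_measurable[OF assms(1)] assms(2)]
  by (simp add: vimage_def Int_def conj_commute)

lemma sets_norm_order_below:
  fixes N :: "'a \<Rightarrow> real"
  assumes N: "N \<in> borel_measurable \<mu>" and A: "A \<in> sets (PiM {..<m} (\<lambda>_. \<mu>))"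
  shows "{x \<in> space (PiM {..<m} (\<lambda>_. \<mu>)). norm_order N m x \<in> A \<and> (\<forall>i\<in>{..<m}. N (x i) \<le> y)}
    \<in> sets (PiM {..<m} (\<lambda>_. \<mu>))"
proof -
  have "Measurable.pred (PiM {..<m} (\<lambda>_. \<mu>)) (\<lambda>x. \<forall>i\<in>{..<m}. N (x i) \<le> y)"
    by (rule pred_Ball_lessThan_le) (simp_all add: borel_measurable_PiM_component N)
  with sets_norm_order_preimage[OF N A] show ?thesis
    unfolding Measurable.pred_def by (rule sets.sets_Collect_conj[rotated])
qed

section \<open>Ties and exchangeability\<close>

text \<open>Integrating out coordinate \<open>i\<close> first, \<open>x i\<close> has to hit the level set of \<open>N\<close> through \<open>N (x j)\<close>,
  which is null.\<close>

lemma AE_PiM_norm_inj: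
  fixes N :: "'a \<Rightarrow> real"
  assumes "prob_space \<mu>" and [measurable]: "N \<in> borel_measurable \<mu>"
    and no_atom: "\<And>y. AE z in \<mu>. N z \<noteq> y" and "finite I"
  shows "AE x in PiM I (\<lambda>_. \<mu>). inj_on (\<lambda>i. N (x i)) I"
proof -
  interpret product_sigma_finite "\<lambda>_::'i. \<mu>"
    unfolding product_sigma_finite_def using assms(1) by (simp add: prob_space_imp_sigma_finite)
  have "AE x in PiM I (\<lambda>_. \<mu>). N (x i) \<noteq> N (x j)" if "i \<in> I" "j \<in> I" "i \<noteq> j" for i j
  proof -
    define S where "S = {x \<in> space (PiM I (\<lambda>_. \<mu>)). N (x i) = N (x j)}"
    have S_sets: "S \<in> sets (PiM I (\<lambda>_. \<mu>))"
      unfolding S_def using that by measurable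
    have null_z: "emeasure \<mu> {z \<in> space \<mu>. N z = y} = 0" for y
      using no_atom[of y] by (subst (asm) AE_iff_measurable[OF _ refl]) auto
    have "emeasure (PiM I (\<lambda>_. \<mu>)) S = (\<integral>\<^sup>+ x. indicator S x \<partial>PiM (insert i (I - {i})) (\<lambda>_. \<mu>))"
      using that S_sets by (simp add: insert_absorb)
    also have "\<dots> = (\<integral>\<^sup>+ x. \<integral>\<^sup>+ z. indicator S (x(i := z)) \<partial>\<mu> \<partial>PiM (I - {i}) (\<lambda>_. \<mu>))"
      using that assms(4) S_sets by (intro product_nn_integral_insert) (auto simp: insert_absorb)
    also have "\<dots> = (\<integral>\<^sup>+ x. emeasure \<mu> {z \<in> space \<mu>. N z = N (x j)} \<partial>PiM (I - {i}) (\<lambda>_. \<mu>))"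
    proof (intro nn_integral_cong)
      fix x assume "x \<in> space (PiM (I - {i}) (\<lambda>_. \<mu>))"
      then have "(\<integral>\<^sup>+ z. indicator S (x(i := z)) \<partial>\<mu>) =
          (\<integral>\<^sup>+ z. indicator {z \<in> space \<mu>. N z = N (x j)} z \<partial>\<mu>)"
        using that by (intro nn_integral_cong)
          (auto simp: S_def indicator_def space_PiM PiE_iff extensional_def)
      also have "\<dots> = emeasure \<mu> {z \<in> space \<mu>. N z = N (x j)}"
        by (intro nn_integral_indicator) measurable
      finally show "(\<integral>\<^sup>+ z. indicator S (x(i := z)) \<partial>\<mu>) = emeasure \<mu> {z \<in> space \<mu>. N z = N (x j)}" .
    qed
    finally have "emeasure (PiM I (\<lambda>_. \<mu>)) S = 0"
      by (simp add: null_z)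
    then show ?thesis
      by (subst AE_iff_measurable[OF S_sets]) (auto simp: S_def)
  qed
  then have "AE x in PiM I (\<lambda>_. \<mu>). \<forall>i\<in>I. \<forall>j\<in>I. i \<noteq> j \<longrightarrow> N (x i) \<noteq> N (x j)"
    using assms(4) by (intro AE_ball_countable'[OF _ countable_finite] AE_impI) simp_all
  then show ?thesis
    by eventually_elim (auto simp: inj_on_def)
qed

lemma strict_max_transpose:
  fixes f :: "'i \<Rightarrow> 'b::linorder"
  assumes "j \<in> I" and "k \<in> I"
  shows "(\<forall>i\<in>I. i \<noteq> k \<longrightarrow> f (Transposition.transpose j k i) < f (Transposition.transpose j k k))
    \<longleftrightarrow> (\<forall>i\<in>I. i \<noteq> j \<longrightarrow> f i < f j)"
proof -
  have "Transposition.transpose j k i = j \<longleftrightarrow> i = k" for i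
    by (auto simp: transpose_eq_iff)
  then have "(\<forall>i\<in>I. i \<noteq> k \<longrightarrow> f (Transposition.transpose j k i) < f (Transposition.transpose j k k))
      \<longleftrightarrow> (\<forall>i\<in>Transposition.transpose j k ` I. i \<noteq> j \<longrightarrow> f i < f j)"
    by auto
  then show ?thesis
    using assms by simp
qed

lemma inj_on_imp_strict_max:
  fixes f :: "'i \<Rightarrow> 'b::linorder"
  assumes "finite I" and "I \<noteq> {}" and "inj_on f I"
  shows "\<exists>l\<in>I. \<forall>i\<in>I. i \<noteq> l \<longrightarrow> f i < f l"
proof -
  have "Max (f ` I) \<in> f ` I"
    using assms(1,2) by simp
  then obtain l where l: "l \<in> I" "f l = Max (f ` I)"
    by (metis imageE)
  then have "f i \<le> f l" if "i \<in> I" for i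
    using that assms(1) by simp
  then show ?thesis
    using l(1) assms(3) by (metis inj_onD order_le_less)
qed

lemma emeasure_PiM_reindex_preimage:
  assumes "prob_space \<mu>" and \<sigma>: "bij_betw \<sigma> I I" and S: "S \<in> sets (PiM I (\<lambda>_. \<mu>))"
  shows "emeasure (PiM I (\<lambda>_. \<mu>)) ((\<lambda>x. \<lambda>i\<in>I. x (\<sigma> i)) -` S \<inter> space (PiM I (\<lambda>_. \<mu>)))
    = emeasure (PiM I (\<lambda>_. \<mu>)) S"
proof -
  let ?P = "PiM I (\<lambda>_. \<mu>)" and ?R = "\<lambda>x. \<lambda>i\<in>I. x (\<sigma> i)"
  have "?R \<in> ?P \<rightarrow>\<^sub>M ?P"
    using \<sigma> by (intro measurable_restrict measurable_component_singleton) (auto simp: bij_betw_def)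
  then have "emeasure ?P (?R -` S \<inter> space ?P) = emeasure (distr ?P ?P ?R) S"
    using S by (simp add: emeasure_distr)
  also have "distr ?P ?P ?R = ?P"
    using distr_PiM_reindex[of I "\<lambda>_. \<mu>" \<sigma> I] assms(1)
      bij_betw_imp_funcset[OF \<sigma>] bij_betw_imp_inj_on[OF \<sigma>] by simp
  finally show ?thesis .
qed

lemma sets_norm_order_strict_max:
  fixes N :: "'a \<Rightarrow> real"
  assumes N [measurable]: "N \<in> borel_measurable \<mu>" and [measurable]: "C \<in> sets (PiM {..<n} (\<lambda>_. \<mu>))" and "l < n"
  shows "{x \<in> space (PiM {..<n} (\<lambda>_. \<mu>)).
      norm_order N n x \<in> C \<and> (\<forall>i\<in>{..<n}. i \<noteq> l \<longrightarrow> N (x i) < N (x l))} \<in> sets (PiM {..<n} (\<lambda>_. \<mu>))"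
proof -
  have comp: "(\<lambda>x. N (x i)) \<in> borel_measurable (PiM {..<n} (\<lambda>_. \<mu>))" if "i < n" for i
    using that by (intro borel_measurable_PiM_component N) simp
  have less: "Measurable.pred (PiM {..<n} (\<lambda>_. \<mu>)) (\<lambda>x. N (x i) < N (x l))" if "i < n" for i
    unfolding Measurable.pred_def using comp[OF that] comp[OF \<open>l < n\<close>] by (rule borel_measurable_less)
  have strict: "Measurable.pred (PiM {..<n} (\<lambda>_. \<mu>)) (\<lambda>x. \<forall>i\<in>{..<n}. i \<noteq> l \<longrightarrow> N (x i) < N (x l))"
  proof (rule pred_intros_finite(3))
    fix i
    assume "i \<in> {..<n}"
    then show "Measurable.pred (PiM {..<n} (\<lambda>_. \<mu>)) (\<lambda>x. i \<noteq> l \<longrightarrow> N (x i) < N (x l))"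
      using less[of i] by (cases "i = l") simp_all
  qed simp
  have "Measurable.pred (PiM {..<n} (\<lambda>_. \<mu>)) (\<lambda>x. norm_order N n x \<in> C)"
    unfolding Measurable.pred_def using N \<open>C \<in> _\<close> by (rule sets_norm_order_preimage)
  from pred_intros_logic(3)[OF this strict] show ?thesis
    by (simp add: Measurable.pred_def)
qed

text \<open>Swapping the coordinates \<open>j\<close> and \<open>k\<close> preserves the product measure and, away from ties,
  the norm ordering; it moves the strict maximum from \<open>j\<close> to \<open>k\<close>.\<close>

lemma emeasure_norm_order_strict_max_swap:
  fixes N :: "'a \<Rightarrow> real"
  assumes \<mu>: "prob_space \<mu>" and N [measurable]: "N \<in> borel_measurable \<mu>"
    and no_atom: "\<And>y. AE z in \<mu>. N z \<noteq> y"
    and C [measurable]: "C \<in> sets (PiM {..<n} (\<lambda>_. \<mu>))" and jk: "j < n" "k < n"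
  defines "S l \<equiv> {x \<in> space (PiM {..<n} (\<lambda>_. \<mu>)).
      norm_order N n x \<in> C \<and> (\<forall>i\<in>{..<n}. i \<noteq> l \<longrightarrow> N (x i) < N (x l))}"
  shows "emeasure (PiM {..<n} (\<lambda>_. \<mu>)) (S j) = emeasure (PiM {..<n} (\<lambda>_. \<mu>)) (S k)"
proof -
  let ?P = "PiM {..<n} (\<lambda>_. \<mu>)"
  define \<tau> where "\<tau> = Transposition.transpose j k"
  define R where "R x = (\<lambda>i\<in>{..<n}. x (\<tau> i))" for x :: "nat \<Rightarrow> 'a"
  have \<tau>: "bij_betw \<tau> {..<n} {..<n}"
    using jk by (simp add: \<tau>_def)
  have R_meas: "R \<in> ?P \<rightarrow>\<^sub>M ?P"
    unfolding R_def using \<tau> by (intro measurable_restrict measurable_component_singleton)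
      (auto simp: bij_betw_def)
  have S_sets: "S l \<in> sets ?P" if "l < n" for l
    unfolding S_def using N C that by (rule sets_norm_order_strict_max)
  have "AE x in ?P. x \<in> S j \<longleftrightarrow> x \<in> R -` S k \<inter> space ?P"
    using AE_PiM_norm_inj[OF \<mu> N no_atom finite_lessThan]
  proof eventually_elim
    case (elim x)
    show ?case
    proof (cases "x \<in> space ?P")
      case True
      have "R x \<in> space ?P"
        using True R_meas by (rule measurable_space[rotated])
      moreover have "norm_order N n (R x) = norm_order N n x"
        using norm_order_restrict[of N n "x \<circ> \<tau>"] norm_order_permute[where N=N and x=x, OF \<tau> elim]
        by (simp add: R_def comp_def)
      moreover have "(\<forall>i\<in>{..<n}. i \<noteq> k \<longrightarrow> N (x (\<tau> i)) < N (x (\<tau> k))) \<longleftrightarrow>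
          (\<forall>i\<in>{..<n}. i \<noteq> j \<longrightarrow> N (x i) < N (x j))"
        unfolding \<tau>_def using jk by (intro strict_max_transpose) simp_all
      ultimately show ?thesis
        using True jk by (simp add: S_def R_def)
    qed (simp add: S_def)
  qed
  then have "emeasure ?P (S j) = emeasure ?P (R -` S k \<inter> space ?P)"
    using S_sets[OF jk(1)] measurable_sets[OF R_meas S_sets[OF jk(2)]] by (rule emeasure_eq_AE)
  also have "\<dots> = emeasure ?P (S k)"
    unfolding R_def using \<mu> \<tau> S_sets[OF jk(2)] by (rule emeasure_PiM_reindex_preimage)
  finally show ?thesis .
qed

lemma emeasure_norm_order_preimage_sum_strict_max:
  fixes N :: "'a \<Rightarrow> real"
  assumes \<mu>: "prob_space \<mu>" and N: "N \<in> borel_measurable \<mu>"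
    and no_atom: "\<And>y. AE z in \<mu>. N z \<noteq> y" and C: "C \<in> sets (PiM {..<Suc m} (\<lambda>_. \<mu>))"
  defines "S l \<equiv> {x \<in> space (PiM {..<Suc m} (\<lambda>_. \<mu>)).
      norm_order N (Suc m) x \<in> C \<and> (\<forall>i\<in>{..<Suc m}. i \<noteq> l \<longrightarrow> N (x i) < N (x l))}"
  shows "emeasure (PiM {..<Suc m} (\<lambda>_. \<mu>)) {x \<in> space (PiM {..<Suc m} (\<lambda>_. \<mu>)). norm_order N (Suc m) x \<in> C}
    = (\<Sum>l<Suc m. emeasure (PiM {..<Suc m} (\<lambda>_. \<mu>)) (S l))"
proof -
  let ?I = "{..<Suc m}"
  let ?P = "PiM ?I (\<lambda>_. \<mu>)"
  have S_sets: "S l \<in> sets ?P" if "l \<in> ?I" for l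
    unfolding S_def using that by (intro sets_norm_order_strict_max[OF N C]) simp
  have "AE x in ?P. x \<in> {x \<in> space ?P. norm_order N (Suc m) x \<in> C} \<longleftrightarrow> x \<in> (\<Union>l\<in>?I. S l)"
    using AE_PiM_norm_inj[OF \<mu> N no_atom finite_lessThan]
  proof eventually_elim
    case (elim x)
    then obtain l where "l \<in> ?I" "\<forall>i\<in>?I. i \<noteq> l \<longrightarrow> N (x i) < N (x l)"
      using inj_on_imp_strict_max[of ?I "\<lambda>i. N (x i)"] by auto
    then show ?case
      by (auto simp: S_def)
  qed
  then have "emeasure ?P {x \<in> space ?P. norm_order N (Suc m) x \<in> C} = emeasure ?P (\<Union>l\<in>?I. S l)"
    using sets_norm_order_preimage[OF N C] S_sets by (intro emeasure_eq_AE sets.finite_UN) simp_all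
  also have "\<dots> = (\<Sum>l\<in>?I. emeasure ?P (S l))"
  proof (rule sum_emeasure[symmetric])
    show "disjoint_family_on S ?I"
      unfolding disjoint_family_on_def
    proof (intro ballI impI)
      fix a b
      assume "a \<in> ?I" "b \<in> ?I" "a \<noteq> b"
      then show "S a \<inter> S b = {}"
        by (auto simp: S_def dest: less_asym)
    qed
  qed (use S_sets in auto)
  finally show ?thesis .
qed

lemma emeasure_norm_order_preimage_last_max:
  fixes N :: "'a \<Rightarrow> real"
  assumes \<mu>: "prob_space \<mu>" and N [measurable]: "N \<in> borel_measurable \<mu>"
    and no_atom: "\<And>y. AE z in \<mu>. N z \<noteq> y" and C: "C \<in> sets (PiM {..<Suc m} (\<lambda>_. \<mu>))"
  shows "emeasure (PiM {..<Suc m} (\<lambda>_. \<mu>))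
      {x \<in> space (PiM {..<Suc m} (\<lambda>_. \<mu>)). norm_order N (Suc m) x \<in> C}
    = of_nat (Suc m) * emeasure (PiM {..<Suc m} (\<lambda>_. \<mu>))
      {x \<in> space (PiM {..<Suc m} (\<lambda>_. \<mu>)).
        norm_order N (Suc m) x \<in> C \<and> (\<forall>i\<in>{..<m}. N (x i) \<le> N (x m))}"
proof -
  let ?I = "{..<Suc m}"
  let ?P = "PiM ?I (\<lambda>_. \<mu>)"
  define S where "S l = {x \<in> space ?P. norm_order N (Suc m) x \<in> C \<and>
    (\<forall>i\<in>?I. i \<noteq> l \<longrightarrow> N (x i) < N (x l))}" for l
  have comp: "(\<lambda>x. N (x i)) \<in> borel_measurable ?P" if "i < m" for i
    using that by (intro borel_measurable_PiM_component N) simp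
  have "Measurable.pred ?P (\<lambda>x. \<forall>i\<in>{..<m}. N (x i) \<le> N (x m))"
    by (rule pred_Ball_lessThan_le[OF comp]) measurable
  then have last_max_sets: "{x \<in> space ?P.
      norm_order N (Suc m) x \<in> C \<and> (\<forall>i\<in>{..<m}. N (x i) \<le> N (x m))} \<in> sets ?P"
    using sets_norm_order_preimage[OF N C] unfolding Measurable.pred_def by (rule sets.sets_Collect_conj)
  have "emeasure ?P {x \<in> space ?P. norm_order N (Suc m) x \<in> C} = (\<Sum>l\<in>?I. emeasure ?P (S l))"
    unfolding S_def by (rule emeasure_norm_order_preimage_sum_strict_max[OF \<mu> N no_atom C])
  also have "\<dots> = (\<Sum>l\<in>?I. emeasure ?P (S m))"
  proof (rule sum.cong[OF refl])
    fix l
    assume "l \<in> ?I"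
    then show "emeasure ?P (S l) = emeasure ?P (S m)"
      unfolding S_def by (intro emeasure_norm_order_strict_max_swap[OF \<mu> N no_atom C]) simp_all
  qed
  also have "\<dots> = of_nat (Suc m) * emeasure ?P (S m)"
    by simp
  also have "emeasure ?P (S m) = emeasure ?P {x \<in> space ?P.
      norm_order N (Suc m) x \<in> C \<and> (\<forall>i\<in>{..<m}. N (x i) \<le> N (x m))}"
  proof (rule emeasure_eq_AE)
    show "AE x in ?P. x \<in> S m \<longleftrightarrow> x \<in> {x \<in> space ?P.
        norm_order N (Suc m) x \<in> C \<and> (\<forall>i\<in>{..<m}. N (x i) \<le> N (x m))}"
      using AE_PiM_norm_inj[OF \<mu> N no_atom finite_lessThan]
    proof eventually_elim
      case (elim x)
      then have "N (x i) \<noteq> N (x m)" if "i < m" for i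
        using that by (auto dest: inj_onD)
      then show ?case
        by (auto simp: S_def order_le_less less_Suc_eq)
    qed
    show "S m \<in> sets ?P"
      unfolding S_def by (intro sets_norm_order_strict_max[OF N C]) simp
  qed (fact last_max_sets)
  finally show ?thesis .
qed

section \<open>The largest point of a sample\<close>

text \<open>Divided by \<open>F(y)\<^sup>m\<close>, this is the probability that the norm-ordered statistics of \<open>m\<close> i.i.d.
  draws from the law \<open>\<mu>\<close> truncated to \<open>{N \<le> y}\<close> lie in \<open>A\<close>.\<close>

definition norm_order_mass_below ::
    "'a measure \<Rightarrow> ('a \<Rightarrow> real) \<Rightarrow> nat \<Rightarrow> (nat \<Rightarrow> 'a) set \<Rightarrow> real \<Rightarrow> ennreal" where
  "norm_order_mass_below \<mu> N m A y = emeasure (PiM {..<m} (\<lambda>_. \<mu>))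
     {x \<in> space (PiM {..<m} (\<lambda>_. \<mu>)). norm_order N m x \<in> A \<and> (\<forall>i\<in>{..<m}. N (x i) \<le> y)}"

lemma emeasure_norm_order_last_coordinate_max:
  fixes N :: "'a \<Rightarrow> real"
  assumes \<mu>: "prob_space \<mu>" and N [measurable]: "N \<in> borel_measurable \<mu>"
    and A [measurable]: "A \<in> sets (PiM {..<m} (\<lambda>_. \<mu>))" and [measurable]: "B \<in> sets borel"
  shows "emeasure (PiM {..<Suc m} (\<lambda>_. \<mu>)) {x \<in> space (PiM {..<Suc m} (\<lambda>_. \<mu>)).
      restrict (norm_order N (Suc m) x) {..<m} \<in> A \<and> N (norm_order N (Suc m) x m) \<in> B
      \<and> (\<forall>i\<in>{..<m}. N (x i) \<le> N (x m))}
    = (\<integral>\<^sup>+ z. indicator B (N z) * norm_order_mass_below \<mu> N m A (N z) \<partial>\<mu>)"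
proof -
  let ?P = "PiM {..<Suc m} (\<lambda>_. \<mu>)" and ?Q = "PiM {..<m} (\<lambda>_. \<mu>)"
  interpret product_sigma_finite "\<lambda>_::nat. \<mu>"
    unfolding product_sigma_finite_def using \<mu> by (simp add: prob_space_imp_sigma_finite)
  define S where "S = {x \<in> space ?P. restrict (norm_order N (Suc m) x) {..<m} \<in> A
      \<and> N (norm_order N (Suc m) x m) \<in> B \<and> (\<forall>i\<in>{..<m}. N (x i) \<le> N (x m))}"
  define T where "T y = {x \<in> space ?Q. norm_order N m x \<in> A \<and> (\<forall>i\<in>{..<m}. N (x i) \<le> y)}" for y
  have comp: "(\<lambda>x. N (x i)) \<in> borel_measurable ?P" if "i < Suc m" for i
    using that by (intro borel_measurable_PiM_component N) simp
  note measurable_norm_order_init[OF N, measurable] measurable_norm_order_last[OF N, measurable]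
  have [measurable]: "Measurable.pred ?P (\<lambda>x. \<forall>i\<in>{..<m}. N (x i) \<le> N (x m))"
    by (rule pred_Ball_lessThan_le) (simp_all add: comp)
  have S_sets: "S \<in> sets ?P"
    unfolding S_def by measurable
  have slice: "indicator S (x(m := z)) = (indicator B (N z) * indicator (T (N z)) x :: ennreal)"
    if x: "x \<in> space ?Q" and z: "z \<in> space \<mu>" for x z
  proof (cases "\<forall>i\<in>{..<m}. N (x i) \<le> N z")
    case True
    then have "norm_order N (Suc m) (x(m := z)) = (norm_order N m x)(m := z)"
      by (intro norm_order_fun_upd_last_max) simp
    moreover have "restrict ((norm_order N m x)(m := z)) {..<m} = norm_order N m x"
      using norm_order_extensional[of N m x] by (intro ext) (simp add: extensional_def)
    moreover have "x(m := z) \<in> space ?P"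
      using x z by (auto simp: space_PiM PiE_iff extensional_def)
    ultimately show ?thesis
      using True x by (auto simp: S_def T_def indicator_def)
  next
    case False
    then show ?thesis
      by (auto simp: S_def T_def indicator_def)
  qed
  have "emeasure ?P S = (\<integral>\<^sup>+ x. indicator S x \<partial>PiM (insert m {..<m}) (\<lambda>_. \<mu>))"
    using S_sets by (simp add: lessThan_Suc)
  also have "\<dots> = (\<integral>\<^sup>+ z. \<integral>\<^sup>+ x. indicator S (x(m := z)) \<partial>?Q \<partial>\<mu>)"
    using S_sets by (intro product_nn_integral_insert_rev) (auto simp: lessThan_Suc)
  also have "\<dots> = (\<integral>\<^sup>+ z. indicator B (N z) * norm_order_mass_below \<mu> N m A (N z) \<partial>\<mu>)"
  proof (intro nn_integral_cong)
    fix z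
    assume "z \<in> space \<mu>"
    then have "(\<integral>\<^sup>+ x. indicator S (x(m := z)) \<partial>?Q) = (\<integral>\<^sup>+ x. indicator B (N z) * indicator (T (N z)) x \<partial>?Q)"
      by (intro nn_integral_cong) (simp add: slice)
    also have "\<dots> = indicator B (N z) * norm_order_mass_below \<mu> N m A (N z)"
      unfolding norm_order_mass_below_def T_def using sets_norm_order_below[OF N A]
      by (rule nn_integral_cmult_indicator)
    finally show "(\<integral>\<^sup>+ x. indicator S (x(m := z)) \<partial>?Q) = indicator B (N z) * norm_order_mass_below \<mu> N m A (N z)" .
  qed
  finally show ?thesis
    unfolding S_def .
qed

lemma emeasure_norm_order_init_last:
  fixes N :: "'a \<Rightarrow> real"
  assumes \<mu>: "prob_space \<mu>" and N [measurable]: "N \<in> borel_measurable \<mu>"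
    and no_atom: "\<And>y. AE z in \<mu>. N z \<noteq> y"
    and [measurable]: "A \<in> sets (PiM {..<m} (\<lambda>_. \<mu>))" "B \<in> sets borel"
  shows "emeasure (PiM {..<Suc m} (\<lambda>_. \<mu>)) {x \<in> space (PiM {..<Suc m} (\<lambda>_. \<mu>)).
      restrict (norm_order N (Suc m) x) {..<m} \<in> A \<and> N (norm_order N (Suc m) x m) \<in> B}
    = of_nat (Suc m) * (\<integral>\<^sup>+ z. indicator B (N z) * norm_order_mass_below \<mu> N m A (N z) \<partial>\<mu>)"
proof -
  let ?P = "PiM {..<Suc m} (\<lambda>_. \<mu>)"
  define C where "C = {y \<in> space ?P. restrict y {..<m} \<in> A \<and> N (y m) \<in> B}"
  have [measurable]: "(\<lambda>y. restrict y {..<m}) \<in> ?P \<rightarrow>\<^sub>M PiM {..<m} (\<lambda>_. \<mu>)"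
    by (rule measurable_restrict_subset) auto
  have [measurable]: "(\<lambda>y. N (y m)) \<in> borel_measurable ?P"
    by (intro borel_measurable_PiM_component N) simp
  have [measurable]: "C \<in> sets ?P"
    unfolding C_def by measurable
  have C_iff: "norm_order N (Suc m) x \<in> C \<longleftrightarrow>
      restrict (norm_order N (Suc m) x) {..<m} \<in> A \<and> N (norm_order N (Suc m) x m) \<in> B"
    if "x \<in> space ?P" for x
    using measurable_space[OF norm_order_measurable[OF N] that] by (simp add: C_def)
  have "{x \<in> space ?P. restrict (norm_order N (Suc m) x) {..<m} \<in> A \<and> N (norm_order N (Suc m) x m) \<in> B}
      = {x \<in> space ?P. norm_order N (Suc m) x \<in> C}"
    by (auto simp: C_iff)
  also have "emeasure ?P \<dots> = of_nat (Suc m) * emeasure ?P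
      {x \<in> space ?P. norm_order N (Suc m) x \<in> C \<and> (\<forall>i\<in>{..<m}. N (x i) \<le> N (x m))}"
    by (rule emeasure_norm_order_preimage_last_max[OF \<mu> N no_atom]) measurable
  also have "{x \<in> space ?P. norm_order N (Suc m) x \<in> C \<and> (\<forall>i\<in>{..<m}. N (x i) \<le> N (x m))}
      = {x \<in> space ?P. restrict (norm_order N (Suc m) x) {..<m} \<in> A \<and> N (norm_order N (Suc m) x m) \<in> B
          \<and> (\<forall>i\<in>{..<m}. N (x i) \<le> N (x m))}"
    by (auto simp: C_iff)
  also have "emeasure ?P \<dots> = (\<integral>\<^sup>+ z. indicator B (N z) * norm_order_mass_below \<mu> N m A (N z) \<partial>\<mu>)"
    by (rule emeasure_norm_order_last_coordinate_max[OF \<mu> N]) measurable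
  finally show ?thesis .
qed

lemma norm_order_mass_below_borel_measurable:
  fixes N :: "'a \<Rightarrow> real"
  assumes \<mu>: "prob_space \<mu>" and N [measurable]: "N \<in> borel_measurable \<mu>"
    and A [measurable]: "A \<in> sets (PiM {..<m} (\<lambda>_. \<mu>))"
  shows "norm_order_mass_below \<mu> N m A \<in> borel_measurable borel"
proof -
  let ?Q = "PiM {..<m} (\<lambda>_. \<mu>)"
  interpret Q: prob_space ?Q
    using \<mu> by (simp add: prob_space_PiM)
  have [measurable]: "norm_order N m \<in> ?Q \<rightarrow>\<^sub>M ?Q"
    by (rule norm_order_measurable[OF N])
  define G where "G = {p \<in> space (borel \<Otimes>\<^sub>M ?Q). norm_order N m (snd p) \<in> A
    \<and> (\<forall>i\<in>{..<m}. N (snd p i) \<le> fst p)}"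
  have [measurable]: "Measurable.pred (borel \<Otimes>\<^sub>M ?Q) (\<lambda>p. \<forall>i\<in>{..<m}. N (snd p i) \<le> fst p)"
    by (rule pred_Ball_lessThan_le) measurable
  have [measurable]: "G \<in> sets (borel \<Otimes>\<^sub>M ?Q)"
    unfolding G_def by measurable
  have "norm_order_mass_below \<mu> N m A = (\<lambda>y. \<integral>\<^sup>+ x. indicator G (y, x) \<partial>?Q)"
  proof
    fix y
    have "norm_order_mass_below \<mu> N m A y = (\<integral>\<^sup>+ x. indicator
        {x \<in> space ?Q. norm_order N m x \<in> A \<and> (\<forall>i\<in>{..<m}. N (x i) \<le> y)} x \<partial>?Q)"
      unfolding norm_order_mass_below_def using sets_norm_order_below[OF N A] by simp
    also have "\<dots> = (\<integral>\<^sup>+ x. indicator G (y, x) \<partial>?Q)"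
      by (intro nn_integral_cong) (simp add: G_def indicator_def space_pair_measure)
    finally show "norm_order_mass_below \<mu> N m A y = (\<integral>\<^sup>+ x. indicator G (y, x) \<partial>?Q)" .
  qed
  also have "\<dots> \<in> borel_measurable borel"
    by (rule Q.borel_measurable_nn_integral) measurable
  finally show ?thesis .
qed

lemma norm_order_mass_below_space:
  fixes N :: "'a \<Rightarrow> real"
  assumes \<mu>: "prob_space \<mu>" and N: "N \<in> borel_measurable \<mu>"
  shows "norm_order_mass_below \<mu> N m (space (PiM {..<m} (\<lambda>_. \<mu>))) y
    = ennreal (measure \<mu> {z \<in> space \<mu>. N z \<le> y} ^ m)"
proof -
  let ?Q = "PiM {..<m} (\<lambda>_. \<mu>)"
  interpret prob_space \<mu>
    by (rule \<mu>)
  interpret product_sigma_finite "\<lambda>_::nat. \<mu>"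
    unfolding product_sigma_finite_def by (simp add: sigma_finite_measure)
  have "{x \<in> space ?Q. norm_order N m x \<in> space ?Q \<and> (\<forall>i\<in>{..<m}. N (x i) \<le> y)}
      = PiE {..<m} (\<lambda>_. {z \<in> space \<mu>. N z \<le> y})"
  proof (intro set_eqI)
    fix x
    show "x \<in> {x \<in> space ?Q. norm_order N m x \<in> space ?Q \<and> (\<forall>i\<in>{..<m}. N (x i) \<le> y)}
        \<longleftrightarrow> x \<in> PiE {..<m} (\<lambda>_. {z \<in> space \<mu>. N z \<le> y})"
      using measurable_space[OF norm_order_measurable[OF N], of x] by (auto simp: space_PiM PiE_iff)
  qed
  moreover have "{z \<in> space \<mu>. N z \<le> y} \<in> sets \<mu>"
    using N by measurable
  ultimately show ?thesis
    by (simp add: norm_order_mass_below_def emeasure_PiM emeasure_eq_measure ennreal_power)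
qed

section \<open>The truncated law\<close>

lemma PiM_density:
  fixes I :: "'i set"
  assumes "sigma_finite_measure \<mu>" and h: "h \<in> borel_measurable \<mu>"
    and "sigma_finite_measure (density \<mu> h)" and I: "finite I"
  shows "PiM I (\<lambda>_. density \<mu> h) = density (PiM I (\<lambda>_. \<mu>)) (\<lambda>x. \<Prod>i\<in>I. h (x i))"
proof -
  interpret \<mu>: product_sigma_finite "\<lambda>_::'i. \<mu>"
    using assms(1) by (simp add: product_sigma_finite_def)
  interpret D: product_sigma_finite "\<lambda>_::'i. density \<mu> h"
    using assms(3) by (simp add: product_sigma_finite_def)
  have H: "(\<lambda>x. \<Prod>i\<in>I. h (x i)) \<in> borel_measurable (PiM I (\<lambda>_. \<mu>))"
    by (rule borel_measurable_prod_ennreal) (simp add: borel_measurable_PiM_component h)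
  show ?thesis
  proof (rule D.PiM_eqI[symmetric, OF I])
    show "sets (density (PiM I (\<lambda>_. \<mu>)) (\<lambda>x. \<Prod>i\<in>I. h (x i))) = sets (PiM I (\<lambda>_. density \<mu> h))"
      by (simp cong: sets_PiM_cong)
  next
    fix A
    assume A: "\<And>i. i \<in> I \<Longrightarrow> A i \<in> sets (density \<mu> h)"
    then have PiE_sets: "PiE I A \<in> sets (PiM I (\<lambda>_. \<mu>))"
      using I by (intro sets_PiM_I_finite) auto
    have "emeasure (density (PiM I (\<lambda>_. \<mu>)) (\<lambda>x. \<Prod>i\<in>I. h (x i))) (PiE I A)
        = (\<integral>\<^sup>+ x. (\<Prod>i\<in>I. h (x i)) * indicator (PiE I A) x \<partial>PiM I (\<lambda>_. \<mu>))"
      using H PiE_sets by (rule emeasure_density)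
    also have "\<dots> = (\<integral>\<^sup>+ x. (\<Prod>i\<in>I. h (x i) * indicator (A i) (x i)) \<partial>PiM I (\<lambda>_. \<mu>))"
    proof (rule nn_integral_cong)
      fix x
      assume "x \<in> space (PiM I (\<lambda>_. \<mu>))"
      then have "indicator (PiE I A) x = (\<Prod>i\<in>I. indicator (A i) (x i) :: ennreal)"
        using I by (cases "\<forall>i\<in>I. x i \<in> A i") (auto simp: space_PiM PiE_iff indicator_def)
      then show "(\<Prod>i\<in>I. h (x i)) * indicator (PiE I A) x = (\<Prod>i\<in>I. h (x i) * indicator (A i) (x i))"
        by (simp add: prod.distrib)
    qed
    also have "\<dots> = (\<Prod>i\<in>I. \<integral>\<^sup>+ z. h z * indicator (A i) z \<partial>\<mu>)"
      using A h I by (intro \<mu>.product_nn_integral_prod) auto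
    also have "\<dots> = (\<Prod>i\<in>I. emeasure (density \<mu> h) (A i))"
      using A h by (intro prod.cong refl) (simp add: emeasure_density)
    finally show "emeasure (density (PiM I (\<lambda>_. \<mu>)) (\<lambda>x. \<Prod>i\<in>I. h (x i))) (PiE I A)
        = (\<Prod>i\<in>I. emeasure (density \<mu> h) (A i))" .
  qed
qed

lemma emeasure_truncated_density:
  fixes N :: "'a \<Rightarrow> real" and y :: real
  assumes "prob_space \<mu>" and N: "N \<in> borel_measurable \<mu>" and B: "B \<in> sets \<mu>"
  defines "F \<equiv> measure \<mu> {z \<in> space \<mu>. N z \<le> y}"
  shows "emeasure (density \<mu> (\<lambda>z. ennreal (indicator {z. N z \<le> y} z / F))) B
    = ennreal (measure \<mu> (B \<inter> {z. N z \<le> y}) / F)"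
proof -
  interpret prob_space \<mu>
    by (rule assms(1))
  have "B \<inter> {z. N z \<le> y} = B \<inter> {z \<in> space \<mu>. N z \<le> y}"
    using sets.sets_into_space[OF B] by blast
  moreover have "{z \<in> space \<mu>. N z \<le> y} \<in> sets \<mu>"
    using N by measurable
  ultimately have BN: "B \<inter> {z. N z \<le> y} \<in> sets \<mu>"
    using B by auto
  have "emeasure (density \<mu> (\<lambda>z. ennreal (indicator {z. N z \<le> y} z / F))) B
      = (\<integral>\<^sup>+ z. ennreal (1 / F) * indicator (B \<inter> {z. N z \<le> y}) z \<partial>\<mu>)"
    using B N by (subst emeasure_density) (auto intro!: nn_integral_cong simp: indicator_def)
  also have "\<dots> = ennreal (1 / F) * ennreal (measure \<mu> (B \<inter> {z. N z \<le> y}))"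
    using BN by (subst nn_integral_cmult_indicator) (simp_all add: emeasure_eq_measure)
  also have "\<dots> = ennreal (measure \<mu> (B \<inter> {z. N z \<le> y}) / F)"
    by (simp add: F_def divide_inverse ennreal_mult[symmetric] mult.commute)
  finally show ?thesis .
qed

lemma trunc_law_eq_density:
  fixes N :: "'a::topological_space \<Rightarrow> real" and y :: real
  assumes M: "prob_space M" and Xp: "Xp \<in> borel_measurable M" and N: "N \<in> borel_measurable borel"
  defines "\<mu> \<equiv> distr M borel Xp"
  shows "trunc_law M Xp N y
    = density \<mu> (\<lambda>z. ennreal (indicator {z. N z \<le> y} z / measure \<mu> {z \<in> space \<mu>. N z \<le> y}))"
proof -
  let ?D = "density \<mu> (\<lambda>z. ennreal (indicator {z. N z \<le> y} z / measure \<mu> {z \<in> space \<mu>. N z \<le> y}))"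
  have \<mu>: "prob_space \<mu>"
    unfolding \<mu>_def using M Xp by (rule prob_space.prob_space_distr)
  have N\<mu>: "N \<in> borel_measurable \<mu>"
    using N by (simp add: \<mu>_def)
  have measure_M: "measure M {w \<in> space M. Xp w \<in> B \<and> N (Xp w) \<le> y} = measure \<mu> (B \<inter> {z. N z \<le> y})"
    if "B \<in> sets borel" for B
  proof -
    have "B \<inter> {z. N z \<le> y} \<in> sets borel"
      using that N by measurable
    then show ?thesis
      unfolding \<mu>_def using Xp by (subst measure_distr) (auto intro!: arg_cong2[where f=measure])
  qed
  have "trunc_law M Xp N y = measure_of UNIV (sets borel) (emeasure ?D)"
    unfolding trunc_law_def
  proof (rule measure_of_eq)
    fix B :: "'a set"
    assume "B \<in> sigma_sets UNIV (sets borel)"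
    then have B: "B \<in> sets borel"
      by (metis sets.sigma_sets_eq space_borel)
    then show "ennreal (measure M {w \<in> space M. Xp w \<in> B \<and> N (Xp w) \<le> y}
        / measure M {w \<in> space M. N (Xp w) \<le> y}) = emeasure ?D B"
      using emeasure_truncated_density[OF \<mu> N\<mu>, of B y] measure_M[OF B] measure_M[of UNIV]
      by (simp add: \<mu>_def)
  qed simp
  also have "\<dots> = ?D"
    using measure_of_of_measure[of ?D] by (simp add: \<mu>_def)
  finally show ?thesis .
qed

lemma prod_truncated_density:
  fixes F :: real
  assumes "0 \<le> F"
  shows "(\<Prod>i<m. ennreal (indicator {z. N z \<le> y} (x i) / F))
    = ennreal ((1 / F) ^ m) * indicator {x. \<forall>i<m. N (x i) \<le> y} x"
proof (cases "\<forall>i<m. N (x i) \<le> y")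
  case True
  then show ?thesis
    using assms by (simp add: ennreal_power)
next
  case False
  then obtain i where "i < m" "\<not> N (x i) \<le> y"
    by auto
  then have "(\<Prod>i<m. ennreal (indicator {z. N z \<le> y} (x i) / F)) = 0"
    by (intro prod_zero bexI[of _ i]) simp_all
  with False show ?thesis
    by simp
qed

lemma emeasure_distr_norm_order_trunc_law:
  fixes N :: "'a::topological_space \<Rightarrow> real" and y :: real
  assumes M: "prob_space M" and Xp: "Xp \<in> borel_measurable M" and N: "N \<in> borel_measurable borel"
    and A: "A \<in> sets (PiM {..<m} (\<lambda>_. borel :: 'a measure))"
  defines "\<mu> \<equiv> distr M borel Xp"
  shows "emeasure (distr (PiM {..<m} (\<lambda>_. trunc_law M Xp N y)) (PiM {..<m} (\<lambda>_. borel)) (norm_order N m)) A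
    = ennreal ((1 / measure \<mu> {z \<in> space \<mu>. N z \<le> y}) ^ m) * norm_order_mass_below \<mu> N m A y"
proof -
  define F where "F = measure \<mu> {z \<in> space \<mu>. N z \<le> y}"
  define h where "h z = ennreal (indicator {z. N z \<le> y} z / F)" for z
  let ?Q = "PiM {..<m} (\<lambda>_. \<mu>)" and ?D = "density \<mu> h"
  have \<mu>: "prob_space \<mu>"
    unfolding \<mu>_def using M Xp by (rule prob_space.prob_space_distr)
  interpret \<mu>: prob_space \<mu>
    by (rule \<mu>)
  have N\<mu> [measurable]: "N \<in> borel_measurable \<mu>"
    using N by (simp add: \<mu>_def)
  have h [measurable]: "h \<in> borel_measurable \<mu>"
    unfolding h_def by measurable
  have trunc: "trunc_law M Xp N y = ?D"
    unfolding h_def F_def \<mu>_def by (rule trunc_law_eq_density[OF M Xp N])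
  have "emeasure ?D (space ?D) \<noteq> \<infinity>"
    unfolding h_def F_def using emeasure_truncated_density[OF \<mu> N\<mu> sets.top, of y] by simp
  then have "sigma_finite_measure ?D"
    using finite_measureI finite_measure_def by blast
  then have product: "PiM {..<m} (\<lambda>_. ?D) = density ?Q (\<lambda>x. \<Prod>i<m. h (x i))"
    using \<mu>.sigma_finite_measure by (intro PiM_density h) simp_all
  have sets_Q: "sets (PiM {..<m} (\<lambda>_. borel :: 'a measure)) = sets ?Q"
    by (rule sets_PiM_cong) (simp_all add: \<mu>_def)
  have order: "norm_order N m \<in> PiM {..<m} (\<lambda>_. ?D) \<rightarrow>\<^sub>M PiM {..<m} (\<lambda>_. borel)"
    using norm_order_measurable[OF N\<mu>, of m] sets_Q
    by (simp add: product cong: measurable_cong_sets)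
  have A\<mu>: "A \<in> sets ?Q"
    using A sets_Q by simp
  have preimage: "norm_order N m -` A \<inter> space ?Q \<in> sets ?Q"
    using measurable_sets[OF norm_order_measurable[OF N\<mu>] A\<mu>] .
  have H: "(\<lambda>x. \<Prod>i<m. h (x i)) \<in> borel_measurable ?Q"
    by (rule borel_measurable_prod_ennreal) (simp add: borel_measurable_PiM_component h)
  have "emeasure (distr (PiM {..<m} (\<lambda>_. trunc_law M Xp N y)) (PiM {..<m} (\<lambda>_. borel)) (norm_order N m)) A
      = emeasure (density ?Q (\<lambda>x. \<Prod>i<m. h (x i))) (norm_order N m -` A \<inter> space ?Q)"
    using emeasure_distr[OF order A] by (simp add: trunc product)
  also have "\<dots> = (\<integral>\<^sup>+ x. (\<Prod>i<m. h (x i)) * indicator (norm_order N m -` A \<inter> space ?Q) x \<partial>?Q)"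
    using H preimage by (rule emeasure_density)
  also have "\<dots> = (\<integral>\<^sup>+ x. ennreal ((1 / F) ^ m) *
      indicator {x \<in> space ?Q. norm_order N m x \<in> A \<and> (\<forall>i\<in>{..<m}. N (x i) \<le> y)} x \<partial>?Q)"
  proof (rule nn_integral_cong)
    fix x
    assume "x \<in> space ?Q"
    moreover have F: "0 \<le> F"
      by (simp add: F_def)
    ultimately show "(\<Prod>i<m. h (x i)) * indicator (norm_order N m -` A \<inter> space ?Q) x = ennreal ((1 / F) ^ m) *
        indicator {x \<in> space ?Q. norm_order N m x \<in> A \<and> (\<forall>i\<in>{..<m}. N (x i) \<le> y)} x"
      unfolding h_def prod_truncated_density[OF F] by (auto simp: indicator_def)
  qed
  also have "\<dots> = ennreal ((1 / F) ^ m) * norm_order_mass_below \<mu> N m A y"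
    unfolding norm_order_mass_below_def
    using sets_norm_order_below[OF N\<mu> A\<mu>] by (rule nn_integral_cmult_indicator)
  finally show ?thesis
    unfolding F_def .
qed

section \<open>Conditioning on the largest norm\<close>

lemma borel_measurable_measure_below:
  fixes N :: "'a \<Rightarrow> real"
  assumes "prob_space \<mu>" and N: "N \<in> borel_measurable \<mu>"
  shows "(\<lambda>y. measure \<mu> {z \<in> space \<mu>. N z \<le> y}) \<in> borel_measurable borel"
proof (rule borel_measurable_mono)
  interpret prob_space \<mu>
    by (rule assms(1))
  show "mono (\<lambda>y. measure \<mu> {z \<in> space \<mu>. N z \<le> y})"
    using N by (intro monoI finite_measure_mono) auto
qed

lemma distr_PiM_norm_order_last:
  fixes N :: "'a \<Rightarrow> real"
  assumes \<mu>: "prob_space \<mu>" and N [measurable]: "N \<in> borel_measurable \<mu>"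
    and no_atom: "\<And>y. AE z in \<mu>. N z \<noteq> y"
  shows "distr (PiM {..<Suc m} (\<lambda>_. \<mu>)) borel (\<lambda>x. N (norm_order N (Suc m) x m))
    = density (distr \<mu> borel N) (\<lambda>y. of_nat (Suc m) * ennreal (measure \<mu> {z \<in> space \<mu>. N z \<le> y} ^ m))"
    (is "_ = density _ ?g")
proof (rule measure_eqI)
  let ?P = "PiM {..<Suc m} (\<lambda>_. \<mu>)" and ?Q = "PiM {..<m} (\<lambda>_. \<mu>)"
  fix B
  assume "B \<in> sets (distr ?P borel (\<lambda>x. N (norm_order N (Suc m) x m)))"
  then have B [measurable]: "B \<in> sets borel"
    by simp
  have [measurable]: "(\<lambda>y. measure \<mu> {z \<in> space \<mu>. N z \<le> y}) \<in> borel_measurable borel"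
    using \<mu> N by (rule borel_measurable_measure_below)
  note last = measurable_norm_order_last[OF N]
  have init: "restrict (norm_order N (Suc m) x) {..<m} \<in> space ?Q" if "x \<in> space ?P" for x
    using measurable_space[OF measurable_norm_order_init[OF N] that] .
  have "(\<lambda>x. N (norm_order N (Suc m) x m)) -` B \<inter> space ?P = {x \<in> space ?P.
      restrict (norm_order N (Suc m) x) {..<m} \<in> space ?Q \<and> N (norm_order N (Suc m) x m) \<in> B}"
  proof (intro set_eqI)
    fix x
    show "x \<in> (\<lambda>x. N (norm_order N (Suc m) x m)) -` B \<inter> space ?P \<longleftrightarrow> x \<in> {x \<in> space ?P.
        restrict (norm_order N (Suc m) x) {..<m} \<in> space ?Q \<and> N (norm_order N (Suc m) x m) \<in> B}"
      using init[of x] by blast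
  qed
  then have "emeasure (distr ?P borel (\<lambda>x. N (norm_order N (Suc m) x m))) B
      = emeasure ?P {x \<in> space ?P. restrict (norm_order N (Suc m) x) {..<m} \<in> space ?Q
          \<and> N (norm_order N (Suc m) x m) \<in> B}"
    using emeasure_distr[OF last B] by simp
  also have "\<dots> = of_nat (Suc m) * (\<integral>\<^sup>+ z. indicator B (N z) * norm_order_mass_below \<mu> N m (space ?Q) (N z) \<partial>\<mu>)"
    by (rule emeasure_norm_order_init_last[OF \<mu> N no_atom sets.top B])
  also have "\<dots> = of_nat (Suc m) * (\<integral>\<^sup>+ z. indicator B (N z) * ennreal (measure \<mu> {z' \<in> space \<mu>. N z' \<le> N z} ^ m) \<partial>\<mu>)"
    by (simp only: norm_order_mass_below_space[OF \<mu> N])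
  also have "\<dots> = (\<integral>\<^sup>+ z. of_nat (Suc m) * (indicator B (N z) * ennreal (measure \<mu> {z' \<in> space \<mu>. N z' \<le> N z} ^ m)) \<partial>\<mu>)"
    by (rule nn_integral_cmult[symmetric]) measurable
  also have "\<dots> = (\<integral>\<^sup>+ z. ?g (N z) * indicator B (N z) \<partial>\<mu>)"
    by (intro nn_integral_cong) (simp only: mult.assoc mult.commute[of "indicator B (N _)"])
  also have "\<dots> = (\<integral>\<^sup>+ y. ?g y * indicator B y \<partial>distr \<mu> borel N)"
    by (rule nn_integral_distr[symmetric]) measurable
  also have "\<dots> = emeasure (density (distr \<mu> borel N) ?g) B"
    by (rule emeasure_density[symmetric]) measurable
  finally show "emeasure (distr ?P borel (\<lambda>x. N (norm_order N (Suc m) x m))) B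
      = emeasure (density (distr \<mu> borel N) ?g) B" .
qed simp

lemma emeasure_norm_order_init_last_eq_nn_integral:
  fixes N :: "'a \<Rightarrow> real"
  assumes \<mu>: "prob_space \<mu>" and N [measurable]: "N \<in> borel_measurable \<mu>"
    and no_atom: "\<And>y. AE z in \<mu>. N z \<noteq> y"
    and A [measurable]: "A \<in> sets (PiM {..<m} (\<lambda>_. \<mu>))" and B [measurable]: "B \<in> sets borel"
  shows "emeasure (PiM {..<Suc m} (\<lambda>_. \<mu>)) {x \<in> space (PiM {..<Suc m} (\<lambda>_. \<mu>)).
      restrict (norm_order N (Suc m) x) {..<m} \<in> A \<and> N (norm_order N (Suc m) x m) \<in> B}
    = (\<integral>\<^sup>+ y\<in>B. ennreal ((1 / measure \<mu> {z \<in> space \<mu>. N z \<le> y}) ^ m) * norm_order_mass_below \<mu> N m A y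
        \<partial>distr (PiM {..<Suc m} (\<lambda>_. \<mu>)) borel (\<lambda>x. N (norm_order N (Suc m) x m)))"
proof -
  let ?Q = "PiM {..<m} (\<lambda>_. \<mu>)"
  define F where "F y = measure \<mu> {z \<in> space \<mu>. N z \<le> y}" for y
  define G where "G y = ennreal ((1 / F y) ^ m) * norm_order_mass_below \<mu> N m A y" for y
  define g where "g y = of_nat (Suc m) * ennreal (F y ^ m)" for y
  have [measurable]: "F \<in> borel_measurable borel"
    unfolding F_def using \<mu> N by (rule borel_measurable_measure_below)
  have [measurable]: "norm_order_mass_below \<mu> N m A \<in> borel_measurable borel"
    using \<mu> N A by (rule norm_order_mass_below_borel_measurable)
  have [measurable]: "G \<in> borel_measurable borel" "g \<in> borel_measurable borel"
    unfolding G_def g_def by measurable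
  have cancel: "ennreal (F y ^ m) * G y = norm_order_mass_below \<mu> N m A y" for y
    \<comment> \<open>where \<open>F y = 0\<close>, \<open>1 / F y = 0\<close> in HOL, but then the mass below \<open>y\<close> vanishes as well\<close>
  proof (cases "F y = 0 \<and> m \<noteq> 0")
    case True
    have "norm_order_mass_below \<mu> N m A y \<le> norm_order_mass_below \<mu> N m (space ?Q) y"
      unfolding norm_order_mass_below_def using sets_norm_order_below[OF N sets.top] sets.sets_into_space[OF A]
      by (intro emeasure_mono) auto
    also have "\<dots> = 0"
      using True by (simp add: norm_order_mass_below_space[OF \<mu> N] F_def)
    finally show ?thesis
      using True by simp
  next
    case False
    then have "F y ^ m * (1 / F y) ^ m = 1"
      by (auto simp: power_mult_distrib[symmetric])
    moreover have "0 \<le> F y"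
      by (simp add: F_def)
    ultimately show ?thesis
      by (simp add: G_def mult.assoc[symmetric] ennreal_mult[symmetric])
  qed
  have "(\<integral>\<^sup>+ y\<in>B. G y \<partial>distr (PiM {..<Suc m} (\<lambda>_. \<mu>)) borel (\<lambda>x. N (norm_order N (Suc m) x m)))
      = (\<integral>\<^sup>+ y. G y * indicator B y \<partial>density (distr \<mu> borel N) g)"
    using distr_PiM_norm_order_last[OF \<mu> N no_atom, of m] by (simp add: g_def[abs_def] F_def)
  also have "\<dots> = (\<integral>\<^sup>+ y. g y * (G y * indicator B y) \<partial>distr \<mu> borel N)"
    by (rule nn_integral_density) measurable
  also have "\<dots> = (\<integral>\<^sup>+ z. g (N z) * (G (N z) * indicator B (N z)) \<partial>\<mu>)"
    by (rule nn_integral_distr) measurable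
  also have "\<dots> = (\<integral>\<^sup>+ z. of_nat (Suc m) * (indicator B (N z) * norm_order_mass_below \<mu> N m A (N z)) \<partial>\<mu>)"
    by (intro nn_integral_cong) (simp add: g_def cancel[symmetric] ac_simps)
  also have "\<dots> = of_nat (Suc m) * (\<integral>\<^sup>+ z. indicator B (N z) * norm_order_mass_below \<mu> N m A (N z) \<partial>\<mu>)"
    by (rule nn_integral_cmult) measurable
  also have "\<dots> = emeasure (PiM {..<Suc m} (\<lambda>_. \<mu>)) {x \<in> space (PiM {..<Suc m} (\<lambda>_. \<mu>)).
      restrict (norm_order N (Suc m) x) {..<m} \<in> A \<and> N (norm_order N (Suc m) x m) \<in> B}"
    by (rule emeasure_norm_order_init_last[symmetric, OF \<mu> N no_atom A B])
  finally show ?thesis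
    by (simp only: G_def F_def)
qed

lemma abs_continuous_fun_imp_isCont:
  assumes "abs_continuous_fun F"
  shows "isCont F x"
  unfolding continuous_at_eps_delta
proof (intro allI impI)
  fix e :: real
  assume "e > 0"
  then have "\<exists>d>0. \<forall>(k::nat) (a::nat \<Rightarrow> real) b.
      (\<forall>i<k. a i \<le> b i) \<and> (\<forall>i<k. \<forall>j<k. i \<noteq> j \<longrightarrow> b i \<le> a j \<or> b j \<le> a i)
      \<and> (\<Sum>i<k. b i - a i) < d \<longrightarrow> (\<Sum>i<k. \<bar>F (b i) - F (a i)\<bar>) < e"
    using assms unfolding abs_continuous_fun_def by blast
  then obtain d where "d > 0" and d: "\<forall>(k::nat) (a::nat \<Rightarrow> real) b.
      (\<forall>i<k. a i \<le> b i) \<and> (\<forall>i<k. \<forall>j<k. i \<noteq> j \<longrightarrow> b i \<le> a j \<or> b j \<le> a i)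
      \<and> (\<Sum>i<k. b i - a i) < d \<longrightarrow> (\<Sum>i<k. \<bar>F (b i) - F (a i)\<bar>) < e"
    by blast
  have "dist (F y) (F x) < e" if "dist y x < d" for y
    using d[rule_format, of 1 "\<lambda>_. min x y" "\<lambda>_. max x y"] that
    by (cases "x \<le> y") (auto simp: dist_real_def abs_minus_commute)
  with \<open>d > 0\<close> show "\<exists>d>0. \<forall>y. dist y x < d \<longrightarrow> dist (F y) (F x) < e"
    by blast
qed

lemma AE_neq_if_isCont_cdf:
  fixes N :: "'a \<Rightarrow> real"
  assumes "prob_space \<mu>" and N: "N \<in> borel_measurable \<mu>" and "isCont (cdf (distr \<mu> borel N)) y"
  shows "AE z in \<mu>. N z \<noteq> y"
proof -
  interpret prob_space \<mu>
    by (rule assms(1))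
  interpret L: real_distribution "distr \<mu> borel N"
    using N by simp
  have "emeasure \<mu> {z \<in> space \<mu>. N z = y} = emeasure (distr \<mu> borel N) {y}"
    using N by (subst emeasure_distr) (auto intro!: arg_cong2[where f=emeasure])
  also have "\<dots> = 0"
    using assms(3) L.isCont_cdf by (simp add: L.emeasure_eq_measure)
  finally show ?thesis
    using N by (subst AE_iff_measurable[OF _ refl]) auto
qed

lemma distr_indep_sample_eq_PiM:
  assumes "prob_space M" and indep: "prob_space.indep_vars M (\<lambda>_. borel) X I" and "I \<noteq> {}"
    and dist: "\<And>i. i \<in> I \<Longrightarrow> distr M borel (X i) = distr M borel Xp"
  shows "distr M (PiM I (\<lambda>_. borel)) (\<lambda>w. \<lambda>i\<in>I. X i w) = PiM I (\<lambda>_. distr M borel Xp)"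
proof -
  interpret prob_space M
    by fact
  have "random_variable borel (X i)" if "i \<in> I" for i
    using indep that unfolding indep_vars_def by auto
  then have "indep_vars (\<lambda>_. borel) X I \<longleftrightarrow>
      distr M (PiM I (\<lambda>_. borel)) (\<lambda>w. \<lambda>i\<in>I. X i w) = PiM I (\<lambda>i. distr M borel (X i))"
    by (rule indep_vars_iff_distr_eq_PiM'[OF \<open>I \<noteq> {}\<close>])
  with indep have "distr M (PiM I (\<lambda>_. borel)) (\<lambda>w. \<lambda>i\<in>I. X i w) = PiM I (\<lambda>i. distr M borel (X i))"
    by simp
  also have "\<dots> = PiM I (\<lambda>_. distr M borel Xp)"
    using dist by (intro PiM_cong) simp_all
  finally show ?thesis .
qed

lemma emeasure_iid_norm_order_init_last:
  fixes N :: "'a::topological_space \<Rightarrow> real" and X :: "nat \<Rightarrow> 'w \<Rightarrow> 'a"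
  assumes M: "prob_space M" and N: "N \<in> borel_measurable borel" and Xp: "Xp \<in> borel_measurable M"
    and indep: "prob_space.indep_vars M (\<lambda>_. borel) X {..<Suc m}"
    and dist: "\<And>i. i < Suc m \<Longrightarrow> distr M borel (X i) = distr M borel Xp"
    and no_atom: "\<And>y. AE z in distr M borel Xp. N z \<noteq> y"
    and A: "A \<in> sets (PiM {..<m} (\<lambda>_. borel :: 'a measure))" and B: "B \<in> sets borel"
  shows "emeasure M {w \<in> space M. restrict (norm_order N (Suc m) (\<lambda>i. X i w)) {..<m} \<in> A
      \<and> N (norm_order N (Suc m) (\<lambda>i. X i w) m) \<in> B}
    = (\<integral>\<^sup>+ y\<in>B. emeasure (distr (PiM {..<m} (\<lambda>_. trunc_law M Xp N y)) (PiM {..<m} (\<lambda>_. borel))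
        (norm_order N m)) A \<partial>distr M borel (\<lambda>w. N (norm_order N (Suc m) (\<lambda>i. X i w) m)))"
proof -
  define \<mu> where "\<mu> = distr M borel Xp"
  define J where "J w = (\<lambda>i\<in>{..<Suc m}. X i w)" for w
  let ?P = "PiM {..<Suc m} (\<lambda>_. \<mu>)" and ?PB = "PiM {..<Suc m} (\<lambda>_. borel :: 'a measure)"
  let ?E = "{x \<in> space ?P. restrict (norm_order N (Suc m) x) {..<m} \<in> A \<and> N (norm_order N (Suc m) x m) \<in> B}"
  have \<mu>: "prob_space \<mu>"
    unfolding \<mu>_def using M Xp by (rule prob_space.prob_space_distr)
  have N\<mu>: "N \<in> borel_measurable \<mu>"
    using N by (simp add: \<mu>_def)
  have J: "J \<in> M \<rightarrow>\<^sub>M ?PB"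
    unfolding J_def using indep by (intro measurable_restrict) (auto simp: prob_space.indep_vars_def[OF M])
  have joint: "distr M ?PB J = ?P"
    unfolding J_def \<mu>_def by (rule distr_indep_sample_eq_PiM[OF M indep _ dist]) auto
  have sample: "norm_order N (Suc m) (\<lambda>i. X i w) = norm_order N (Suc m) (J w)" for w
    unfolding J_def by (rule norm_order_restrict[symmetric])
  have sets_P: "sets ?PB = sets ?P" and A\<mu>: "A \<in> sets (PiM {..<m} (\<lambda>_. \<mu>))"
    using A by (simp_all add: \<mu>_def cong: sets_PiM_cong)
  note measurable_norm_order_init[OF N\<mu>, measurable] measurable_norm_order_last[OF N\<mu>, measurable]
  have "?E \<in> sets ?P"
    using A\<mu> B by measurable
  then have E: "?E \<in> sets ?PB"
    using sets_P by simp
  have "J -` ?E \<inter> space M = {w \<in> space M. restrict (norm_order N (Suc m) (\<lambda>i. X i w)) {..<m} \<in> A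
      \<and> N (norm_order N (Suc m) (\<lambda>i. X i w) m) \<in> B}"
  proof (intro set_eqI)
    fix w
    show "w \<in> J -` ?E \<inter> space M \<longleftrightarrow> w \<in> {w \<in> space M. restrict (norm_order N (Suc m) (\<lambda>i. X i w)) {..<m} \<in> A
        \<and> N (norm_order N (Suc m) (\<lambda>i. X i w) m) \<in> B}"
      using measurable_space[OF J, of w] by (auto simp: sample space_PiM \<mu>_def)
  qed
  then have "emeasure M {w \<in> space M. restrict (norm_order N (Suc m) (\<lambda>i. X i w)) {..<m} \<in> A
      \<and> N (norm_order N (Suc m) (\<lambda>i. X i w) m) \<in> B} = emeasure ?P ?E"
    using emeasure_distr[OF J E] by (simp add: joint)
  also have "\<dots> = (\<integral>\<^sup>+ y\<in>B. ennreal ((1 / measure \<mu> {z \<in> space \<mu>. N z \<le> y}) ^ m)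
      * norm_order_mass_below \<mu> N m A y \<partial>distr ?P borel (\<lambda>x. N (norm_order N (Suc m) x m)))"
    using \<mu> N\<mu> no_atom[folded \<mu>_def] A\<mu> B by (rule emeasure_norm_order_init_last_eq_nn_integral)
  also have "distr ?P borel (\<lambda>x. N (norm_order N (Suc m) x m))
      = distr M borel (\<lambda>w. N (norm_order N (Suc m) (\<lambda>i. X i w) m))"
    using distr_distr[OF measurable_norm_order_last[OF N] J]
    by (simp add: joint sample comp_def)
  finally show ?thesis
    using emeasure_distr_norm_order_trunc_law[OF M Xp N A] by (simp only: \<mu>_def)
qed

lemma borel_measurable_emeasure_distr_trunc_law:
  fixes N :: "'a::topological_space \<Rightarrow> real"
  assumes M: "prob_space M" and Xp: "Xp \<in> borel_measurable M" and N: "N \<in> borel_measurable borel"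
    and A: "A \<in> sets (PiM {..<m} (\<lambda>_. borel :: 'a measure))"
  shows "(\<lambda>y. emeasure (distr (PiM {..<m} (\<lambda>_. trunc_law M Xp N y)) (PiM {..<m} (\<lambda>_. borel))
    (norm_order N m)) A) \<in> borel_measurable borel"
proof -
  define \<mu> where "\<mu> = distr M borel Xp"
  have \<mu>: "prob_space \<mu>"
    unfolding \<mu>_def using M Xp by (rule prob_space.prob_space_distr)
  have N\<mu>: "N \<in> borel_measurable \<mu>"
    using N by (simp add: \<mu>_def)
  have A\<mu>: "A \<in> sets (PiM {..<m} (\<lambda>_. \<mu>))"
    using A by (simp add: \<mu>_def cong: sets_PiM_cong)
  have [measurable]: "(\<lambda>y. measure \<mu> {z \<in> space \<mu>. N z \<le> y}) \<in> borel_measurable borel"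
    using \<mu> N\<mu> by (rule borel_measurable_measure_below)
  have [measurable]: "norm_order_mass_below \<mu> N m A \<in> borel_measurable borel"
    using \<mu> N\<mu> A\<mu> by (rule norm_order_mass_below_borel_measurable)
  show ?thesis
    unfolding emeasure_distr_norm_order_trunc_law[OF M Xp N A] \<mu>_def[symmetric] by measurable
qed

theorem lemma2p1:
  fixes M :: "'w measure" and N :: "real ^ 'd \<Rightarrow> real" and n :: nat
    and X :: "nat \<Rightarrow> 'w \<Rightarrow> real ^ 'd" and Xp :: "'w \<Rightarrow> real ^ 'd"
  assumes "prob_space M"
    and "is_norm N"
    and "n \<ge> 1"
    and "Xp \<in> borel_measurable M"
    and "prob_space.indep_vars M (\<lambda>_. borel) X {..<n}"
    and "\<forall>i<n. distr M borel (X i) = distr M borel Xp"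
    and "abs_continuous_fun (cdf (distr M borel (\<lambda>w. N (Xp w))))"
  shows "\<forall>A \<in> sets (PiM {..<n-1} (\<lambda>_. borel :: (real ^ 'd) measure)). \<forall>B \<in> sets (borel :: real measure).
     (\<lambda>y. emeasure (distr (PiM {..<n-1} (\<lambda>_. trunc_law M Xp N y))
                          (PiM {..<n-1} (\<lambda>_. borel)) (norm_order N (n-1))) A)
       \<in> borel_measurable borel
   \<and> emeasure M {w \<in> space M.
        restrict (norm_order N n (\<lambda>i. X i w)) {..<n-1} \<in> A
        \<and> N (norm_order N n (\<lambda>i. X i w) (n-1)) \<in> B}
     = (\<integral>\<^sup>+ y \<in> B. emeasure (distr (PiM {..<n-1} (\<lambda>_. trunc_law M Xp N y))
                          (PiM {..<n-1} (\<lambda>_. borel)) (norm_order N (n-1))) A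
          \<partial>(distr M borel (\<lambda>w. N (norm_order N n (\<lambda>i. X i w) (n-1)))))"
proof -
  obtain m where n: "n = Suc m"
    using assms(3) by (cases n) auto
  have N: "N \<in> borel_measurable borel"
    using assms(2) by (rule is_norm_borel_measurable)
  have law: "prob_space (distr M borel Xp)"
    using assms(1,4) by (rule prob_space.prob_space_distr)
  have "distr (distr M borel Xp) borel N = distr M borel (\<lambda>w. N (Xp w))"
    using assms(4) N by (simp add: distr_distr comp_def)
  then have "isCont (cdf (distr (distr M borel Xp) borel N)) y" for y
    using abs_continuous_fun_imp_isCont[OF assms(7)] by simp
  then have no_atom: "AE z in distr M borel Xp. N z \<noteq> y" for y
    using law N by (intro AE_neq_if_isCont_cdf) simp_all
  show ?thesis
    unfolding n diff_Suc_1
    using borel_measurable_emeasure_distr_trunc_law[OF assms(1,4) N]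
      emeasure_iid_norm_order_init_last[OF assms(1) N assms(4) assms(5)[unfolded n] _ no_atom]
      assms(6) n by simp
qed

end
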